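(* Let $A,B$ be systems of equal finite dimension $d$, each with observable $L=\sum_{n=0}^{d-1}n|n\rangle\langle n|$, and $L_{AB}=L\otimes\mathbb{I}+\mathbb{I}\otimes L$. Let $\rho_{AB}$ be a bipartite state with $[1,d-1]\cap\mathrm{modes}(\rho_{AB})=\emptyset$. Then there is no allowed operation that concentrates coherence, with respect to any coherence measure: for every allowed operation $\mathcal{E}$ on $AB$, the reduced states $\mathrm{tr}_B\mathcal{E}(\rho_{AB})$ and $\mathrm{tr}_A\mathcal{E}(\rho_{AB})$ are incoherent, i.e. commute with $L$.
   Context: For a bipartite operator $X$, its $j$th mode is $X^{(j)}:=\sum_c\Pi_{c+j}X\Pi_c$, with $\Pi_c$ the projector onto the eigenvalue-$c$ eigenspace of $L_{AB}$; $\mathrm{modes}(X):=\{j\in\mathbb{N}: X^{(j)}\neq0\}$. A state $\sigma$ of a system with observable $L$ is incoherent if $[\sigma,L]=0$. An allowed operation on $AB$ is a completely positive trace-preserving map $\mathcal{E}$ with $\mathcal{E}(e^{-iL_{AB}x}(\cdot)e^{iL_{AB}x})=e^{-iL_{AB}x}\mathcal{E}(\cdot)e^{iL_{AB}x}$ for all $x\in\mathbb{R}$. Any coherence measure considered vanishes on incoherent states. *)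

theory Defs
  imports "Jordan_Normal_Form.Matrix"
begin

(* Operators on C^n are complex n x n matrices (Jordan_Normal_Form mat).
   Bipartite system AB with local dimension d: basis |a>|b> has index a*d+b. *)

definition mtrace :: "complex mat \<Rightarrow> complex" where
  "mtrace A = (\<Sum>i<dim_row A. A $$ (i, i))"

definition kron :: "complex mat \<Rightarrow> complex mat \<Rightarrow> complex mat" where
  "kron A B = mat (dim_row A * dim_row B) (dim_col A * dim_col B)
     (\<lambda>(i, j). A $$ (i div dim_row B, j div dim_col B) * B $$ (i mod dim_row B, j mod dim_col B))"

definition psd :: "complex mat \<Rightarrow> bool" where
  "psd M \<longleftrightarrow> square_mat M \<and>
     (\<forall>v. dim_vec v = dim_row M \<longrightarrow>
        Im (conjugate v \<bullet> (M *\<^sub>v v)) = 0 \<and> Re (conjugate v \<bullet> (M *\<^sub>v v)) \<ge> 0)"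

definition is_state :: "nat \<Rightarrow> complex mat \<Rightarrow> bool" where
  "is_state n \<rho> \<longleftrightarrow> \<rho> \<in> carrier_mat n n \<and> psd \<rho> \<and> mtrace \<rho> = 1"

definition Lloc :: "nat \<Rightarrow> complex mat" where
  "Lloc d = mat d d (\<lambda>(i, j). if i = j then of_nat i else 0)"

definition LAB :: "nat \<Rightarrow> complex mat" where
  "LAB d = kron (Lloc d) (1\<^sub>m d) + kron (1\<^sub>m d) (Lloc d)"

(* projector onto the eigenvalue-c eigenspace of L_AB (L_AB is diagonal in the product basis) *)
definition Proj :: "nat \<Rightarrow> complex \<Rightarrow> complex mat" where
  "Proj d c = mat (d * d) (d * d) (\<lambda>(p, q). if p = q \<and> LAB d $$ (p, p) = c then 1 else 0)"

(* j-th mode X^(j) = sum_c Pi_{c+j} X Pi_c, c ranging over the eigenvalues 0,...,2d-2 of L_AB *)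
definition mode :: "nat \<Rightarrow> complex mat \<Rightarrow> nat \<Rightarrow> complex mat" where
  "mode d X j = foldr (\<lambda>c acc. Proj d (of_nat (c + j)) * X * Proj d (of_nat c) + acc)
                   [0..<2 * d - 1] (0\<^sub>m (d * d) (d * d))"

definition modes :: "nat \<Rightarrow> complex mat \<Rightarrow> nat set" where
  "modes d X = {j. mode d X j \<noteq> 0\<^sub>m (d * d) (d * d)}"

(* e^{-i L_AB x} (L_AB is diagonal) *)
definition Uev :: "nat \<Rightarrow> real \<Rightarrow> complex mat" where
  "Uev d x = mat (d * d) (d * d) (\<lambda>(p, q). if p = q then exp (- \<i> * of_real x * LAB d $$ (p, p)) else 0)"

definition block :: "nat \<Rightarrow> complex mat \<Rightarrow> nat \<Rightarrow> nat \<Rightarrow> complex mat" where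
  "block m M i j = mat m m (\<lambda>(x, y). M $$ (i * m + x, j * m + y))"

(* (id_n \<otimes> E) applied to an (n*m) x (n*m) matrix *)
definition ampl :: "nat \<Rightarrow> nat \<Rightarrow> (complex mat \<Rightarrow> complex mat) \<Rightarrow> complex mat \<Rightarrow> complex mat" where
  "ampl n m E M = mat (n * m) (n * m) (\<lambda>(p, q). E (block m M (p div m) (q div m)) $$ (p mod m, q mod m))"

definition cptp :: "nat \<Rightarrow> (complex mat \<Rightarrow> complex mat) \<Rightarrow> bool" where
  "cptp m E \<longleftrightarrow>
     (\<forall>X \<in> carrier_mat m m. E X \<in> carrier_mat m m) \<and>
     (\<forall>X \<in> carrier_mat m m. \<forall>Y \<in> carrier_mat m m. E (X + Y) = E X + E Y) \<and>
     (\<forall>X \<in> carrier_mat m m. \<forall>a. E (a \<cdot>\<^sub>m X) = a \<cdot>\<^sub>m E X) \<and>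
     (\<forall>X \<in> carrier_mat m m. mtrace (E X) = mtrace X) \<and>
     (\<forall>n. \<forall>M \<in> carrier_mat (n * m) (n * m). psd M \<longrightarrow> psd (ampl n m E M))"

definition allowed :: "nat \<Rightarrow> (complex mat \<Rightarrow> complex mat) \<Rightarrow> bool" where
  "allowed d E \<longleftrightarrow> cptp (d * d) E \<and>
     (\<forall>x::real. \<forall>X \<in> carrier_mat (d * d) (d * d).
        E (Uev d x * X * Uev d (- x)) = Uev d x * E X * Uev d (- x))"

definition ptrace_B :: "nat \<Rightarrow> complex mat \<Rightarrow> complex mat" where
  "ptrace_B d Y = mat d d (\<lambda>(a, a'). \<Sum>b<d. Y $$ (a * d + b, a' * d + b))"

definition ptrace_A :: "nat \<Rightarrow> complex mat \<Rightarrow> complex mat" where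
  "ptrace_A d Y = mat d d (\<lambda>(b, b'). \<Sum>a<d. Y $$ (a * d + b, a * d + b'))"

definition incoherent :: "complex mat \<Rightarrow> complex mat \<Rightarrow> bool" where
  "incoherent L \<sigma> \<longleftrightarrow> \<sigma> * L = L * \<sigma>"

end

theory Submission
  imports Defs
begin

(* L_AB is diagonal in the product basis, with eigenvalue level p = a + b at the index
   p = a * d + b. Conjugation by e^(-i L_AB x) multiplies the (p, q) entry of a matrix by
   exp (-i x (level p - level q)); choosing x so that two such phases differ shows that a
   covariant linear map sends a matrix supported on one level difference k to a matrix supported
   on k, hence it preserves the vanishing of any set of level differences. The state rho is
   Hermitian, so the vanishing of its modes 1, ..., d - 1 forces that of the modes
   -(d - 1), ..., -1 too, and then the same holds for E rho. An off-diagonal entry (a, a') of either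
   reduced state is a sum of entries of E rho with level difference a - a', which lies in that
   range; so both reduced states are diagonal and commute with L. *)

definition level :: "nat \<Rightarrow> nat \<Rightarrow> nat" where
  "level d p = p div d + p mod d"

definition level_diff :: "nat \<Rightarrow> nat \<Rightarrow> nat \<Rightarrow> int" where
  "level_diff d p q = int (level d p) - int (level d q)"

definition vanishes_on_modes :: "nat \<Rightarrow> int set \<Rightarrow> complex mat \<Rightarrow> bool" where
  "vanishes_on_modes d S X \<longleftrightarrow>
     (\<forall>p < d * d. \<forall>q < d * d. level_diff d p q \<in> S \<longrightarrow> X $$ (p, q) = 0)"

definition restrict_modes :: "nat \<Rightarrow> int set \<Rightarrow> complex mat \<Rightarrow> complex mat" where
  "restrict_modes d S X =
     mat (d * d) (d * d) (\<lambda>(p, q). if level_diff d p q \<in> S then X $$ (p, q) else 0)"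

lemma level_less:
  assumes "p < d * d"
  shows "level d p < 2 * d - 1"
proof -
  have "p div d < d" using assms by (simp add: less_mult_imp_div_less)
  moreover have "p mod d < d" using assms by (cases "d = 0") auto
  ultimately show ?thesis unfolding level_def by linarith
qed

lemma level_index: "b < d \<Longrightarrow> level d (a * d + b) = a + b"
  by (simp add: level_def)

lemma level_diff_index:
  "b < d \<Longrightarrow> b' < d \<Longrightarrow> level_diff d (a * d + b) (a' * d + b') = (int a + int b) - (int a' + int b')"
  by (simp add: level_diff_def level_index)

lemma index_less:
  fixes a b d :: nat
  assumes "a < d" and "b < d"
  shows "a * d + b < d * d"
proof -
  have "a * d + b < (a + 1) * d" using assms(2) by simp
  also have "\<dots> \<le> d * d" using assms(1) by (intro mult_right_mono) auto
  finally show ?thesis .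
qed

lemma LAB_diag_entry: "p < d * d \<Longrightarrow> LAB d $$ (p, p) = of_nat (level d p)"
  using level_less[of p d] less_mult_imp_div_less[of p d d]
  by (cases "d = 0") (auto simp: LAB_def kron_def Lloc_def level_def)

lemma Lloc_eq_mat_diag: "Lloc d = mat_diag d of_nat"
  unfolding Lloc_def mat_diag_def by (rule eq_matI) auto

lemma Proj_eq_mat_diag:
  "Proj d c = mat_diag (d * d) (\<lambda>p. if LAB d $$ (p, p) = c then 1 else 0)"
  unfolding Proj_def mat_diag_def by (rule eq_matI) auto

lemma Uev_eq_mat_diag:
  "Uev d x = mat_diag (d * d) (\<lambda>p. exp (- \<i> * of_real x * LAB d $$ (p, p)))"
  unfolding Uev_def mat_diag_def by (rule eq_matI) auto

lemma mat_diag_conj: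
  assumes "X \<in> carrier_mat n n"
  shows "mat_diag n f * X * mat_diag n g = mat n n (\<lambda>(i, j). f i * X $$ (i, j) * g j)"
  using assms by (auto simp: mat_diag_mult_left mat_diag_mult_right[of _ n n] intro!: eq_matI)

lemma Uev_conj:
  assumes "X \<in> carrier_mat (d * d) (d * d)"
  shows "Uev d x * X * Uev d (- x) =
    mat (d * d) (d * d) (\<lambda>(p, q). exp (- \<i> * of_real x * of_int (level_diff d p q)) * X $$ (p, q))"
  unfolding Uev_eq_mat_diag mat_diag_conj[OF assms]
  by (rule eq_matI) (auto simp: LAB_diag_entry level_diff_def algebra_simps simp flip: exp_add)

lemma Uev_conj_single_mode:
  assumes "X \<in> carrier_mat (d * d) (d * d)" and "vanishes_on_modes d (- {k}) X"
  shows "Uev d x * X * Uev d (- x) = exp (- \<i> * of_real x * of_int k) \<cdot>\<^sub>m X"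
  unfolding Uev_conj[OF assms(1)]
  using assms by (intro eq_matI) (auto simp: vanishes_on_modes_def)

lemma exp_phase_separates:
  fixes k m :: int
  assumes "k \<noteq> m"
  obtains x :: real where "exp (- \<i> * of_real x * of_int k) \<noteq> exp (- \<i> * of_real x * of_int m)"
proof
  define x where "x = pi / of_int (k - m)"
  have "- \<i> * of_real x * of_int k = - \<i> * of_real x * of_int m - \<i> * of_real pi"
    using assms by (simp add: x_def field_simps)
  then have "exp (- \<i> * of_real x * of_int k) = - exp (- \<i> * of_real x * of_int m)"
    by (simp add: exp_diff exp_minus)
  then show "exp (- \<i> * of_real x * of_int k) \<noteq> exp (- \<i> * of_real x * of_int m)"
    using exp_not_eq_zero by auto
qed

lemma vanishes_on_modes_add:
  assumes "A \<in> carrier_mat (d * d) (d * d)" and "B \<in> carrier_mat (d * d) (d * d)"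
    and "vanishes_on_modes d S A" and "vanishes_on_modes d S B"
  shows "vanishes_on_modes d S (A + B)"
  using assms by (simp add: vanishes_on_modes_def)

lemma vanishes_on_modes_subset:
  "vanishes_on_modes d T X \<Longrightarrow> S \<subseteq> T \<Longrightarrow> vanishes_on_modes d S X"
  unfolding vanishes_on_modes_def by blast

lemma restrict_modes_carrier [simp]: "restrict_modes d S X \<in> carrier_mat (d * d) (d * d)"
  by (simp add: restrict_modes_def)

lemma restrict_modes_vanishes: "vanishes_on_modes d (- S) (restrict_modes d S X)"
  by (simp add: restrict_modes_def vanishes_on_modes_def)

lemma restrict_modes_empty: "restrict_modes d {} X = 0\<^sub>m (d * d) (d * d)"
  by (rule eq_matI) (auto simp: restrict_modes_def)

lemma restrict_modes_insert:
  "k \<notin> S \<Longrightarrow> restrict_modes d (insert k S) X = restrict_modes d {k} X + restrict_modes d S X"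
  by (rule eq_matI) (auto simp: restrict_modes_def)

lemma restrict_modes_complement:
  assumes "X \<in> carrier_mat (d * d) (d * d)" and "vanishes_on_modes d S X"
  shows "restrict_modes d ({- int (2 * d)..int (2 * d)} - S) X = X"
proof (rule eq_matI)
  fix p q assume "p < dim_row X" and "q < dim_col X"
  then have p: "p < d * d" and q: "q < d * d" using assms(1) by auto
  have "level_diff d p q \<in> {- int (2 * d)..int (2 * d)}"
    using level_less[OF p] level_less[OF q] by (auto simp: level_diff_def)
  then show "restrict_modes d ({- int (2 * d)..int (2 * d)} - S) X $$ (p, q) = X $$ (p, q)"
    using assms(2) p q by (auto simp: restrict_modes_def vanishes_on_modes_def)
qed (use assms(1) in \<open>auto simp: restrict_modes_def\<close>)

lemma allowed_carrier:
  "allowed d E \<Longrightarrow> X \<in> carrier_mat (d * d) (d * d) \<Longrightarrow> E X \<in> carrier_mat (d * d) (d * d)"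
  unfolding allowed_def cptp_def by simp

lemma allowed_add:
  "allowed d E \<Longrightarrow> X \<in> carrier_mat (d * d) (d * d) \<Longrightarrow> Y \<in> carrier_mat (d * d) (d * d) \<Longrightarrow>
    E (X + Y) = E X + E Y"
  unfolding allowed_def cptp_def by simp

lemma allowed_smult:
  "allowed d E \<Longrightarrow> X \<in> carrier_mat (d * d) (d * d) \<Longrightarrow> E (a \<cdot>\<^sub>m X) = a \<cdot>\<^sub>m E X"
  unfolding allowed_def cptp_def by simp

lemma allowed_covariant:
  "allowed d E \<Longrightarrow> X \<in> carrier_mat (d * d) (d * d) \<Longrightarrow>
    E (Uev d x * X * Uev d (- x)) = Uev d x * E X * Uev d (- x)"
  unfolding allowed_def by simp

lemma allowed_zero:
  assumes "allowed d E"
  shows "E (0\<^sub>m (d * d) (d * d)) = 0\<^sub>m (d * d) (d * d)"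
proof -
  have "E (0\<^sub>m (d * d) (d * d)) = 0 \<cdot>\<^sub>m E (0\<^sub>m (d * d) (d * d))"
    using allowed_smult[OF assms zero_carrier_mat, where a = 0] by simp
  also have "\<dots> = 0\<^sub>m (d * d) (d * d)"
    using allowed_carrier[OF assms zero_carrier_mat] by (intro eq_matI) auto
  finally show ?thesis .
qed

lemma allowed_preserves_single_mode:
  assumes al: "allowed d E" and X: "X \<in> carrier_mat (d * d) (d * d)"
    and single: "vanishes_on_modes d (- {k}) X"
  shows "vanishes_on_modes d (- {k}) (E X)"
  unfolding vanishes_on_modes_def
proof (intro allI impI)
  fix p q assume p: "p < d * d" and q: "q < d * d" and m: "level_diff d p q \<in> - {k}"
  have EX: "E X \<in> carrier_mat (d * d) (d * d)" using allowed_carrier[OF al X] .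
  obtain x where sep: "exp (- \<i> * of_real x * of_int k) \<noteq> exp (- \<i> * of_real x * of_int (level_diff d p q))"
    using exp_phase_separates[of k "level_diff d p q"] m by auto
  have "exp (- \<i> * of_real x * of_int k) \<cdot>\<^sub>m E X = E (Uev d x * X * Uev d (- x))"
    using Uev_conj_single_mode[OF X single] allowed_smult[OF al X] by simp
  also have "\<dots> = Uev d x * E X * Uev d (- x)"
    using allowed_covariant[OF al X] .
  finally have "(exp (- \<i> * of_real x * of_int k) \<cdot>\<^sub>m E X) $$ (p, q) = (Uev d x * E X * Uev d (- x)) $$ (p, q)"
    by (rule arg_cong)
  then have "exp (- \<i> * of_real x * of_int k) * E X $$ (p, q)
      = exp (- \<i> * of_real x * of_int (level_diff d p q)) * E X $$ (p, q)"
    unfolding Uev_conj[OF EX] using EX p q by simp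
  then show "E X $$ (p, q) = 0" using sep by simp
qed

lemma allowed_preserves_vanishing:
  assumes al: "allowed d E" and X: "X \<in> carrier_mat (d * d) (d * d)"
    and van: "vanishes_on_modes d S X"
  shows "vanishes_on_modes d S (E X)"
proof -
  \<comment> \<open>X is the sum of its single-mode parts restrict_modes d {k} X, k outside S.\<close>
  have "vanishes_on_modes d S (E (restrict_modes d T X))" if "finite T" "T \<inter> S = {}" for T
    using that
  proof (induction T rule: finite_induct)
    case empty
    then show ?case
      by (simp add: restrict_modes_empty allowed_zero[OF al] vanishes_on_modes_def)
  next
    case (insert k T)
    have "vanishes_on_modes d (- {k}) (E (restrict_modes d {k} X))"
      using allowed_preserves_single_mode[OF al restrict_modes_carrier restrict_modes_vanishes] .
    then have "vanishes_on_modes d S (E (restrict_modes d {k} X))"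
      by (rule vanishes_on_modes_subset) (use insert.prems in blast)
    moreover have "vanishes_on_modes d S (E (restrict_modes d T X))"
      using insert by blast
    ultimately show ?case
      unfolding restrict_modes_insert[OF insert.hyps(2)] allowed_add[OF al restrict_modes_carrier restrict_modes_carrier]
      by (intro vanishes_on_modes_add allowed_carrier[OF al restrict_modes_carrier])
  qed
  from this[of "{- int (2 * d)..int (2 * d)} - S"] show ?thesis
    unfolding restrict_modes_complement[OF X van] by blast
qed

lemma mode_foldr_entry:
  fixes j :: nat
  assumes X: "X \<in> carrier_mat (d * d) (d * d)" and p: "p < d * d" and q: "q < d * d"
  defines "F cs \<equiv> foldr (\<lambda>c acc. Proj d (of_nat (c + j)) * X * Proj d (of_nat c) + acc) cs (0\<^sub>m (d * d) (d * d))"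
  shows "F cs \<in> carrier_mat (d * d) (d * d)"
    and "F cs $$ (p, q) = (\<Sum>c\<leftarrow>cs. if level d p = c + j \<and> level d q = c then X $$ (p, q) else 0)"
proof -
  have term_carrier: "Proj d (of_nat (c + j)) * X * Proj d (of_nat c) \<in> carrier_mat (d * d) (d * d)" for c
    using X by (intro mult_carrier_mat) (auto simp: Proj_def)
  have term_entry: "(Proj d (of_nat (c + j)) * X * Proj d (of_nat c)) $$ (p, q)
      = (if level d p = c + j \<and> level d q = c then X $$ (p, q) else 0)" for c
    unfolding Proj_eq_mat_diag mat_diag_conj[OF X] using p q
    by (simp add: LAB_diag_entry of_nat_eq_iff del: of_nat_add)
  have "F cs \<in> carrier_mat (d * d) (d * d) \<and>
      F cs $$ (p, q) = (\<Sum>c\<leftarrow>cs. if level d p = c + j \<and> level d q = c then X $$ (p, q) else 0)"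
    by (induction cs) (use p q term_carrier term_entry in \<open>auto simp: F_def\<close>)
  then show "F cs \<in> carrier_mat (d * d) (d * d)"
    and "F cs $$ (p, q) = (\<Sum>c\<leftarrow>cs. if level d p = c + j \<and> level d q = c then X $$ (p, q) else 0)"
    by blast+
qed

lemma mode_entry:
  assumes X: "X \<in> carrier_mat (d * d) (d * d)" and p: "p < d * d" and q: "q < d * d"
  shows "mode d X j $$ (p, q) = (if level_diff d p q = int j then X $$ (p, q) else 0)"
proof -
  have "mode d X j $$ (p, q)
      = (\<Sum>c\<leftarrow>[0..<2 * d - 1]. if level d p = c + j \<and> level d q = c then X $$ (p, q) else 0)"
    unfolding mode_def by (rule mode_foldr_entry(2)[OF X p q])
  also have "\<dots> = (\<Sum>c\<in>{0..<2 * d - 1}. if c = level d q then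
      (if level d p = level d q + j then X $$ (p, q) else 0) else 0)"
    unfolding sum_list_distinct_conv_sum_set[OF distinct_upt] set_upt by (rule sum.cong) auto
  also have "\<dots> = (if level_diff d p q = int j then X $$ (p, q) else 0)"
    using level_less[OF q] by (simp add: sum.delta level_diff_def)
  finally show ?thesis .
qed

lemma quad_form_two_point:
  fixes M :: "complex mat" and z :: complex
  assumes M: "M \<in> carrier_mat n n" and p: "p < n" and q: "q < n" and pq: "p \<noteq> q"
  defines "v \<equiv> vec n (\<lambda>k. (if k = p then 1 else 0) + (if k = q then z else 0))"
  shows "conjugate v \<bullet> (M *\<^sub>v v) = M $$ (p, p) + z * M $$ (p, q) + cnj z * M $$ (q, p) + cnj z * z * M $$ (q, q)"
proof -
  have Mv: "(M *\<^sub>v v) $ i = M $$ (i, p) + z * M $$ (i, q)" if i: "i < n" for i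
  proof -
    have "(M *\<^sub>v v) $ i = (\<Sum>k\<in>{0..<n}. M $$ (i, k) * v $ k)"
      using M i by (simp add: v_def scalar_prod_def row_def)
    also have "\<dots> = (\<Sum>k\<in>{0..<n}. (if k = p then M $$ (i, p) else 0) + (if k = q then z * M $$ (i, q) else 0))"
      by (rule sum.cong) (auto simp: v_def algebra_simps)
    also have "\<dots> = M $$ (i, p) + z * M $$ (i, q)"
      using p q by (simp add: sum.distrib)
    finally show ?thesis .
  qed
  have "conjugate v \<bullet> (M *\<^sub>v v) = (\<Sum>k\<in>{0..<n}. conjugate v $ k * (M *\<^sub>v v) $ k)"
    using M by (simp add: v_def scalar_prod_def)
  also have "\<dots> = (\<Sum>k\<in>{0..<n}. (if k = p then M $$ (p, p) + z * M $$ (p, q) else 0)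
        + (if k = q then cnj z * (M $$ (q, p) + z * M $$ (q, q)) else 0))"
    using Mv p q by (intro sum.cong) (auto simp: v_def pq)
  also have "\<dots> = M $$ (p, p) + z * M $$ (p, q) + cnj z * (M $$ (q, p) + z * M $$ (q, q))"
    using p q by (simp add: sum.distrib)
  finally show ?thesis by (simp add: algebra_simps)
qed

lemma psd_hermitian:
  fixes M :: "complex mat"
  assumes psd: "psd M" and M: "M \<in> carrier_mat n n" and p: "p < n" and q: "q < n" and pq: "p \<noteq> q"
  shows "M $$ (q, p) = cnj (M $$ (p, q))"
proof -
  have "Im (M $$ (p, p) + z * M $$ (p, q) + cnj z * M $$ (q, p) + cnj z * z * M $$ (q, q)) = 0" for z
    using psd M unfolding psd_def quad_form_two_point[OF M p q pq, symmetric] by simp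
  from this[of 0] this[of 1] this[of "- 1"] this[of \<i>]
  have "Im (M $$ (p, q)) + Im (M $$ (q, p)) = 0" and "Re (M $$ (p, q)) - Re (M $$ (q, p)) = 0"
    by simp_all
  then show ?thesis by (intro complex_eqI) auto
qed

lemma state_vanishes_on_low_modes:
  assumes st: "is_state (d * d) \<rho>" and modes: "{1..d - 1} \<inter> modes d \<rho> = {}"
  shows "vanishes_on_modes d {k. 0 < \<bar>k\<bar> \<and> \<bar>k\<bar> < int d} \<rho>"
  unfolding vanishes_on_modes_def
proof (intro allI impI)
  fix p q assume p: "p < d * d" and q: "q < d * d" and k: "level_diff d p q \<in> {k. 0 < \<bar>k\<bar> \<and> \<bar>k\<bar> < int d}"
  have R: "\<rho> \<in> carrier_mat (d * d) (d * d)" and psd: "psd \<rho>"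
    using st unfolding is_state_def by auto
  have up: "\<rho> $$ (p', q') = 0"
    if "p' < d * d" "q' < d * d" "level_diff d p' q' = int j" "1 \<le> j" "j \<le> d - 1" for p' q' j
  proof -
    have "mode d \<rho> j = 0\<^sub>m (d * d) (d * d)" using modes that(4,5) unfolding modes_def by auto
    then show ?thesis using mode_entry[OF R that(1,2), of j] that by simp
  qed
  show "\<rho> $$ (p, q) = 0"
  proof (cases "level_diff d p q > 0")
    case True
    then show ?thesis using k by (intro up[OF p q, of "nat (level_diff d p q)"]) auto
  next
    case False
    have "level_diff d q p = int (nat (- level_diff d p q))" using False by (simp add: level_diff_def)
    then have "\<rho> $$ (q, p) = 0" using k False by (intro up[OF q p, of "nat (- level_diff d p q)"]) auto
    moreover have "p \<noteq> q" using k by (auto simp: level_diff_def)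
    ultimately show ?thesis using psd_hermitian[OF psd R q p] by simp
  qed
qed

lemma incoherent_Lloc_diagonal:
  assumes S: "\<sigma> \<in> carrier_mat d d"
    and diag: "\<And>a a'. a < d \<Longrightarrow> a' < d \<Longrightarrow> a \<noteq> a' \<Longrightarrow> \<sigma> $$ (a, a') = 0"
  shows "incoherent (Lloc d) \<sigma>"
  unfolding incoherent_def Lloc_eq_mat_diag mat_diag_mult_left[OF S] mat_diag_mult_right[OF S]
  by (rule eq_matI) (auto simp: diag)

lemma ptrace_B_incoherent:
  assumes "vanishes_on_modes d {k. 0 < \<bar>k\<bar> \<and> \<bar>k\<bar> < int d} Y"
  shows "incoherent (Lloc d) (ptrace_B d Y)"
proof (rule incoherent_Lloc_diagonal)
  fix a a' assume a: "a < d" and a': "a' < d" and "a \<noteq> a'"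
  then have "Y $$ (a * d + b, a' * d + b) = 0" if "b < d" for b
    using assms that index_less[OF a that] index_less[OF a' that]
    by (auto simp: vanishes_on_modes_def level_diff_index)
  then show "ptrace_B d Y $$ (a, a') = 0" using a a' by (simp add: ptrace_B_def)
qed (simp add: ptrace_B_def)

lemma ptrace_A_incoherent:
  assumes "vanishes_on_modes d {k. 0 < \<bar>k\<bar> \<and> \<bar>k\<bar> < int d} Y"
  shows "incoherent (Lloc d) (ptrace_A d Y)"
proof (rule incoherent_Lloc_diagonal)
  fix b b' assume b: "b < d" and b': "b' < d" and "b \<noteq> b'"
  then have "Y $$ (a * d + b, a * d + b') = 0" if "a < d" for a
    using assms that index_less[OF that b] index_less[OF that b']
    by (auto simp: vanishes_on_modes_def level_diff_index)
  then show "ptrace_A d Y $$ (b, b') = 0" using b b' by (simp add: ptrace_A_def)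
qed (simp add: ptrace_A_def)

theorem mainTheorem6:
  fixes d :: nat and \<rho> :: "complex mat" and E :: "complex mat \<Rightarrow> complex mat"
  assumes "0 < d"
    and "is_state (d * d) \<rho>"
    and "{1..d - 1} \<inter> modes d \<rho> = {}"
    and "allowed d E"
  shows "incoherent (Lloc d) (ptrace_B d (E \<rho>)) \<and> incoherent (Lloc d) (ptrace_A d (E \<rho>))"
proof -
  have "\<rho> \<in> carrier_mat (d * d) (d * d)"
    using assms(2) by (simp add: is_state_def)
  moreover have "vanishes_on_modes d {k. 0 < \<bar>k\<bar> \<and> \<bar>k\<bar> < int d} \<rho>"
    using state_vanishes_on_low_modes[OF assms(2,3)] .
  ultimately have "vanishes_on_modes d {k. 0 < \<bar>k\<bar> \<and> \<bar>k\<bar> < int d} (E \<rho>)"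
    by (rule allowed_preserves_vanishing[OF assms(4)])
  then show ?thesis
    using ptrace_B_incoherent ptrace_A_incoherent by blast
qed

end
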